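(* Let $D \in \mathbb{N}$, let $X, Y \subset \mathbb{R}^D$ be finite sets, and let $\mathcal{N}$ be a family of functions $\mathbb{R}^D \to \mathbb{R}$ having the universal approximation property (UAP). If $$\sum_{x \in X} \tau(x) = \sum_{y \in Y} \tau(y) \quad \text{for every } \tau \in \mathcal{N},$$ then $X = Y$.
   Context: A family $\mathcal{N}$ of functions $\mathbb{R}^D \to \mathbb{R}$ has the universal approximation property (UAP) if for every compact set $K \subset \mathbb{R}^D$, every continuous function $f : K \to \mathbb{R}$ and every $\varepsilon > 0$ there is a function $g \in \mathrm{span}(\mathcal{N})$ (a finite linear combination of elements of $\mathcal{N}$) with $\sup_{x \in K} |f(x) - g(x)| \le \varepsilon$. For a function $\tau$ and a finite set $X$, the paper writes $\tau(X)$ for the aggregated value $\sum_{x \in X} \tau(x)$. *)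

theory Defs
  imports "HOL-Analysis.Analysis"
begin

definition has_UAP :: "(real ^ 'n \<Rightarrow> real) set \<Rightarrow> bool" where
  "has_UAP N \<longleftrightarrow>
     (\<forall>K f \<epsilon>. compact K \<longrightarrow> continuous_on K f \<longrightarrow> \<epsilon> > 0 \<longrightarrow>
        (\<exists>S c. finite S \<and> S \<subseteq> N \<and>
           (\<forall>x \<in> K. \<bar>f x - (\<Sum>\<tau>\<in>S. c \<tau> * \<tau> x)\<bar> \<le> \<epsilon>)))"

end

theory Submission
  imports Defs
begin

text \<open>Every function is continuous on the finite set X \<union> Y, so the UAP approximates it there
uniformly by linear combinations of elements of N; aggregation over X and over Y agrees on such
combinations and is continuous in the sup norm, hence it agrees on every function. Applied to the
indicator function of a point p, it shows that p \<in> X exactly when p \<in> Y.\<close>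

lemma sum_linear_combination_eq:
  fixes c :: "('a \<Rightarrow> 'b::comm_semiring_0) \<Rightarrow> 'b"
  assumes "S \<subseteq> N" and "\<forall>\<tau> \<in> N. (\<Sum>x\<in>X. \<tau> x) = (\<Sum>y\<in>Y. \<tau> y)"
  shows "(\<Sum>x\<in>X. \<Sum>\<tau>\<in>S. c \<tau> * \<tau> x) = (\<Sum>y\<in>Y. \<Sum>\<tau>\<in>S. c \<tau> * \<tau> y)"
proof -
  have "(\<Sum>x\<in>X. \<Sum>\<tau>\<in>S. c \<tau> * \<tau> x) = (\<Sum>\<tau>\<in>S. c \<tau> * (\<Sum>x\<in>X. \<tau> x))"
    by (simp add: sum.swap[of _ X] sum_distrib_left)
  also have "\<dots> = (\<Sum>\<tau>\<in>S. c \<tau> * (\<Sum>y\<in>Y. \<tau> y))"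
    using assms by (intro sum.cong) auto
  also have "\<dots> = (\<Sum>y\<in>Y. \<Sum>\<tau>\<in>S. c \<tau> * \<tau> y)"
    by (simp add: sum.swap[of _ Y] sum_distrib_left)
  finally show ?thesis .
qed

lemma sum_abs_diff_le_card_mult:
  fixes f g :: "'a \<Rightarrow> 'b::linordered_idom"
  assumes "\<And>x. x \<in> X \<Longrightarrow> \<bar>f x - g x\<bar> \<le> e"
  shows "\<bar>sum f X - sum g X\<bar> \<le> of_nat (card X) * e"
proof -
  have "\<bar>sum f X - sum g X\<bar> \<le> (\<Sum>x\<in>X. \<bar>f x - g x\<bar>)"
    by (metis sum_abs sum_subtractf)
  also have "\<dots> \<le> of_nat (card X) * e"
    using assms by (rule sum_bounded_above)
  finally show ?thesis .
qed

lemma has_UAP_sum_eq: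
  fixes N :: "(real ^ 'n \<Rightarrow> real) set" and X Y :: "(real ^ 'n) set"
    and f :: "real ^ 'n \<Rightarrow> real"
  assumes "finite X" and "finite Y" and UAP: "has_UAP N"
    and sums_eq: "\<forall>\<tau> \<in> N. (\<Sum>x\<in>X. \<tau> x) = (\<Sum>y\<in>Y. \<tau> y)"
  shows "sum f X = sum f Y"
proof -
  have "\<bar>sum f X - sum f Y\<bar> \<le> e" if "e > 0" for e
  proof -
    define d where "d = e / (real (card X) + real (card Y) + 1)"
    have "d > 0" using \<open>e > 0\<close> by (simp add: d_def)
    moreover have "compact (X \<union> Y)" and "continuous_on (X \<union> Y) f"
      using assms by (simp_all add: finite_imp_compact continuous_on_finite)
    ultimately obtain S c where "S \<subseteq> N"
      and approx: "\<forall>x \<in> X \<union> Y. \<bar>f x - (\<Sum>\<tau>\<in>S. c \<tau> * \<tau> x)\<bar> \<le> d"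
      using UAP unfolding has_UAP_def by meson
    define g where "g x = (\<Sum>\<tau>\<in>S. c \<tau> * \<tau> x)" for x
    have "sum g X = sum g Y"
      unfolding g_def using \<open>S \<subseteq> N\<close> sums_eq by (rule sum_linear_combination_eq)
    moreover have "\<bar>sum f X - sum g X\<bar> \<le> real (card X) * d"
      and "\<bar>sum f Y - sum g Y\<bar> \<le> real (card Y) * d"
      using approx unfolding g_def by (auto intro!: sum_abs_diff_le_card_mult)
    ultimately have "\<bar>sum f X - sum f Y\<bar> \<le> (real (card X) + real (card Y)) * d"
      by (simp add: distrib_right)
    also have "\<dots> \<le> e"
      using \<open>e > 0\<close> by (simp add: d_def field_simps)
    finally show ?thesis .
  qed
  then show ?thesis
    using dense_eq0_I[of "sum f X - sum f Y"] by simp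
qed

theorem theorem1:
  fixes N :: "(real ^ 'n \<Rightarrow> real) set" and X Y :: "(real ^ 'n) set"
  assumes "finite X" and "finite Y"
    and "has_UAP N"
    and "\<forall>\<tau> \<in> N. (\<Sum>x\<in>X. \<tau> x) = (\<Sum>y\<in>Y. \<tau> y)"
  shows "X = Y"
proof (rule set_eqI)
  fix p
  have "(\<Sum>x\<in>X. if x = p then 1 else 0) = (\<Sum>y\<in>Y. if y = p then 1 else (0::real))"
    using assms by (rule has_UAP_sum_eq)
  then show "p \<in> X \<longleftrightarrow> p \<in> Y"
    using assms by (simp add: sum.delta' split: if_splits)
qed

end
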